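(* For a barcode $f$ with $n \ge 1$ bars, $\Delta(f^{\wedge p})$ for any integer $p \ge 1$ can be obtained from $n$ and $C(f^{\wedge n})$: if $f, f'$ are barcodes both with exactly $n\ge1$ bars and $C(f^{\wedge n}) = C(f'^{\wedge n})$, then $\Delta(f^{\wedge p}) = \Delta(f'^{\wedge p})$ for all $p\ge1$.
   Context: A barcode is a finite formal sum $f = \sum_{i=1}^n x^{\alpha_i}y^{\ell_i}$ with $\alpha_i \in \mathbb{R}$, $\ell_i \in \mathbb{R}_{>0}$ (a multiset of $n$ bars). Its $p$-th exterior power ($p\ge1$) is $f^{\wedge p} = \sum_{1\le i_1<\cdots<i_p\le n} x^{\alpha_{i_1}+\cdots+\alpha_{i_p}}y^{\min\{\ell_{i_1},\ldots,\ell_{i_p}\}}$ (zero if $p>n$). The critical series is $C(f) = \sum_i x^{\alpha_i} - \sum_i x^{\alpha_i+\ell_i}$ (a finite integer combination of symbols $x^g$, $g\in\mathbb{R}$), and the drift is $\Delta(f) = \sum_{i=1}^n \alpha_i$. *)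

theory Defs
  imports Complex_Main "HOL-Library.Multiset"
begin

text \<open>A bar x^alpha y^ell is the pair (alpha, ell). A formal sum of bars is a multiset of pairs.
A barcode is such a multiset in which every length ell is positive; we represent a barcode with
n bars by a list of length n (bar i is f ! i), so that index subsets give the exterior power
with the correct multiplicities.\<close>

type_synonym bar = "real \<times> real"

definition is_barcode :: "bar list \<Rightarrow> bool" where
  "is_barcode f \<longleftrightarrow> (\<forall>b \<in> set f. snd b > 0)"

definition ext_power :: "nat \<Rightarrow> bar list \<Rightarrow> bar multiset" where
  "ext_power p f = image_mset
     (\<lambda>S. (\<Sum>i\<in>S. fst (f ! i), Min ((\<lambda>i. snd (f ! i)) ` S)))
     (mset_set {S. S \<subseteq> {..<length f} \<and> card S = p})"

text \<open>Critical series: an integer combination of symbols x^g, as the coefficient function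
 g \<mapsto> #{bars with alpha = g} - #{bars with alpha + ell = g}.\<close>
definition critical :: "bar multiset \<Rightarrow> (real \<Rightarrow> int)" where
  "critical F = (\<lambda>g. int (size (filter_mset (\<lambda>b. fst b = g) F))
                   - int (size (filter_mset (\<lambda>b. fst b + snd b = g) F)))"

definition drift :: "bar multiset \<Rightarrow> real" where
  "drift F = (\<Sum>b\<in>#F. fst b)"

end

theory Submission
  imports Defs
begin

text \<open>Every bar lies in exactly (n-1 choose p-1) of the p-element index sets, so the drift of
the p-th exterior power is that binomial coefficient times the drift of f. The n-th exterior
power is the single bar x^(drift f) y^(min ell), and since its length is positive, the critical
series of this bar recovers its start drift f.\<close>

lemma card_subsets_containing:
  assumes "finite A" "i \<in> A" "p \<ge> 1"
  shows "card {S. S \<subseteq> A \<and> card S = p \<and> i \<in> S} = (card A - 1) choose (p - 1)"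
proof -
  have "{S. S \<subseteq> A \<and> card S = p \<and> i \<in> S} = insert i ` {T. T \<subseteq> A - {i} \<and> card T = p - 1}"
  proof (intro equalityI subsetI)
    fix S assume S: "S \<in> {S. S \<subseteq> A \<and> card S = p \<and> i \<in> S}"
    then have "finite S" using assms(1) finite_subset by blast
    with S assms(3) show "S \<in> insert i ` {T. T \<subseteq> A - {i} \<and> card T = p - 1}"
      by (auto intro!: image_eqI[of _ _ "S - {i}"])
  next
    fix S assume "S \<in> insert i ` {T. T \<subseteq> A - {i} \<and> card T = p - 1}"
    then obtain T where "S = insert i T" "T \<subseteq> A - {i}" "card T = p - 1" by blast
    moreover have "finite T" "i \<notin> T" using \<open>T \<subseteq> A - {i}\<close> assms(1) finite_subset by auto
    ultimately show "S \<in> {S. S \<subseteq> A \<and> card S = p \<and> i \<in> S}" using assms by auto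
  qed
  moreover have "inj_on (insert i) {T. T \<subseteq> A - {i} \<and> card T = p - 1}"
    by (rule inj_onI) blast
  ultimately show ?thesis
    using assms by (simp add: card_image n_subsets)
qed

lemma sum_over_subsets_of_card:
  fixes g :: "'a \<Rightarrow> 'b::comm_semiring_1"
  assumes "finite A" "p \<ge> 1"
  shows "(\<Sum>S\<in>{S. S \<subseteq> A \<and> card S = p}. \<Sum>i\<in>S. g i)
           = of_nat ((card A - 1) choose (p - 1)) * (\<Sum>i\<in>A. g i)"
proof -
  let ?U = "{S. S \<subseteq> A \<and> card S = p}"
  have "(\<Sum>S\<in>?U. \<Sum>i\<in>S. g i) = (\<Sum>S\<in>?U. \<Sum>i\<in>{i\<in>A. i \<in> S}. g i)"
    by (rule sum.cong) (auto intro!: sum.cong)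
  also have "\<dots> = (\<Sum>i\<in>A. \<Sum>S\<in>{S\<in>?U. i \<in> S}. g i)"
    using sum.swap_restrict[of ?U A "\<lambda>S i. g i" "\<lambda>S i. i \<in> S"] assms(1) by simp
  also have "\<dots> = (\<Sum>i\<in>A. of_nat ((card A - 1) choose (p - 1)) * g i)"
  proof (rule sum.cong)
    fix i assume "i \<in> A"
    have "{S\<in>?U. i \<in> S} = {S. S \<subseteq> A \<and> card S = p \<and> i \<in> S}" by auto
    with card_subsets_containing[OF assms(1) \<open>i \<in> A\<close> assms(2)]
    show "(\<Sum>S\<in>{S\<in>?U. i \<in> S}. g i) = of_nat ((card A - 1) choose (p - 1)) * g i" by simp
  qed simp
  finally show ?thesis by (simp add: sum_distrib_left)
qed

lemma drift_mset: "drift (mset f) = (\<Sum>i<length f. fst (f ! i))"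
  unfolding drift_def
  by (simp add: sum_mset_sum_list sum_list_sum_nth atLeast0LessThan flip: mset_map)

lemma drift_ext_power:
  assumes "p \<ge> 1"
  shows "drift (ext_power p f) = real ((length f - 1) choose (p - 1)) * drift (mset f)"
proof -
  have "drift (ext_power p f)
          = (\<Sum>S\<in>{S. S \<subseteq> {..<length f} \<and> card S = p}. \<Sum>i\<in>S. fst (f ! i))"
    unfolding drift_def ext_power_def
    by (simp add: image_mset.compositionality comp_def sum_unfold_sum_mset)
  then show ?thesis
    using sum_over_subsets_of_card[of "{..<length f}" p] assms by (simp add: drift_mset)
qed

lemma ext_power_length: "ext_power (length f) f = {#(drift (mset f), Min (snd ` set f))#}"
proof -
  have "{S. S \<subseteq> {..<length f} \<and> card S = length f} = {{..<length f}}"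
    using card_subset_eq[of "{..<length f}"] by auto
  moreover have "(\<lambda>i. snd (f ! i)) ` {..<length f} = snd ` set f"
    by (auto simp: set_conv_nth image_iff)
  ultimately show ?thesis
    unfolding ext_power_def by (simp add: drift_mset)
qed

lemma barcode_Min_length_pos:
  assumes "is_barcode f" "f \<noteq> []"
  shows "Min (snd ` set f) > 0"
  using assms by (simp add: is_barcode_def)

lemma critical_singleton_determines_start:
  assumes "critical {#(a, l)#} = critical {#(a', l')#}" "l > 0" "l' > 0"
  shows "a = a'"
proof (rule ccontr)
  assume "a \<noteq> a'"
  have "critical {#(a, l)#} a = 1"
    using \<open>l > 0\<close> by (simp add: critical_def)
  moreover have "critical {#(a', l')#} a \<le> 0"
    using \<open>a \<noteq> a'\<close> by (simp add: critical_def)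
  ultimately show False
    using assms(1) by simp
qed

theorem proposition10:
  fixes f f' :: "bar list" and n :: nat
  assumes "is_barcode f" and "is_barcode f'"
    and "length f = n" and "length f' = n" and "n \<ge> 1"
    and "critical (ext_power n f) = critical (ext_power n f')"
  shows "\<forall>p::nat. p \<ge> 1 \<longrightarrow> drift (ext_power p f) = drift (ext_power p f')"
proof -
  have "f \<noteq> []" "f' \<noteq> []"
    using assms(3-5) by auto
  then have "Min (snd ` set f) > 0" "Min (snd ` set f') > 0"
    using barcode_Min_length_pos assms(1,2) by auto
  moreover have "critical {#(drift (mset f), Min (snd ` set f))#}
                   = critical {#(drift (mset f'), Min (snd ` set f'))#}"
    using assms(3,4,6) by (simp add: ext_power_length[symmetric])
  ultimately have "drift (mset f) = drift (mset f')"
    using critical_singleton_determines_start by blast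
  then show ?thesis
    using drift_ext_power assms(3,4) by simp
qed

end
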